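(* Let $\mathcal{G}$ be a subgraph of $G$ satisfying $P_{\mathcal{G}}$, and let $q\in\Delta$ with $G_q=\mathcal{G}$. Then $q\in\Gamma$ if and only if $q\in\Gamma_{\mathcal{G}}$, and in that case $q$ is a stable equilibrium. In other words, $\Gamma_s\cap\{q\in\Delta:G_q=\mathcal{G}\}=\Gamma\cap\{q\in\Delta:G_q=\mathcal{G}\}=\Gamma_{\mathcal{G}}$.
   Context: Let $G=(\mathbb{V},E)$ be a finite graph with adjacency $\sim$ and edge set $E$. Let $a_{ij}=a_{ji}\ge0$ ($>0$ only if $i\sim j$) and $p_{ij}=p_{ji}\in[0,1]$ ($=0$ if $i\not\sim j$), with some $a_{ij}p_{ij}>0$. Fix $h_1\in(0,1]$; $\Delta$ is the set of arrays $x=(x_{ij})$ with $x_{ij}=x_{ji}\ge0$, $x_{ij}=0$ if $i\not\sim j$, $\sum_{i,j}x_{ij}=1$, $\sum_{(i,j):a_{ij}p_{ij}>0}x_{ij}\ge h_1$; $x_i=\sum_jx_{ij}$. $\partial\Delta$: the $x\in\Delta$ for which some vertex $i$ having a neighbour $j$ with $a_{ij}p_{ij}>0$ has $\sum_{j:a_{ij}p_{ij}>0}x_{ij}=0$. $H(x)=\sum_{(i,j):x_{ij}>0}a_{ij}p_{ij}x_{ij}^2/(x_ix_j)$; $y_{ij}=a_{ij}p_{ij}x_{ij}/(x_ix_j)$ ($0$ if $a_{ij}p_{ij}=0$); $F(x)_{ij}=x_{ij}(y_{ij}-H(x))$ ($0$ if $x_{ij}=0$); $\Gamma=\{x\in\Delta:F(x)=0\}$.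 For $x\in\Gamma\cap(\Delta\setminus\partial\Delta)$, $J(x)$ is the Jacobian (indexed by pairs of edges) of $(x_e)_{e\in E}\mapsto(F_e(x))_{e\in E}$, with $x_{ij}=x_{ji}=x_e$ for $e=\{i,j\}$, $x_i=\sum_jx_{ij}$, the formulas for $H$ (terms with $a_{ij}p_{ij}>0$) and $F$ regarded as smooth functions of unconstrained variables near $x$. $x$ is a stable equilibrium iff $x\in\Gamma\cap(\Delta\setminus\partial\Delta)$ and all eigenvalues of $J(x)$ have nonpositive real part; $\Gamma_s$ is the set of stable equilibria. $G_x$: subgraph with vertex set $\mathbb{V}$, $i,j$ adjacent iff $x_{ij}>0$. For a subgraph $\mathcal{G}$ of $G$ (vertex set $\mathbb{V}$), $P_{\mathcal{G}}$ means: (1) all edges $\{i,j\}$ of $\mathcal{G}$ in a same component have the same value $a_{ij}p_{ij}>0$; (2) each component has at most one vertex with several neighbours; (3) a vertex $i$ lies on an edge of $\mathcal{G}$ iff $a_{ij}p_{ij}>0$ for some $j\sim i$. Under $P_{\mathcal{G}}$: the nucleus of a component is its unique vertex with several neighbours (chosen arbitrarily if the component has exactly two vertices; the vertex itself if isolated); $N$ is the set of nuclei; for $i\in N$, $(ap)_i=a_{ik}p_{ik}$ for any $\mathcal{G}$-neighbour $k$ of $i$ ($:=0$ if $i$ is isolated). $\Gamma_{\mathcal{G}}$ is the set of $q\in\Delta$ with $G_q=\mathcal{G}$, $q_i=(ap)_i/(2\sum_{j\in N}(ap)_j)$ for all $i\in N$, and for each $i\in N$ the numbers $q_{ij}$ ($j$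 a $\mathcal{G}$-neighbour of $i$) positive with sum $q_i$. *)

theory Defs
  imports "HOL-Analysis.Analysis"
begin

(* Graph G: vertex set = the finite type 'v, adjacency adj (symmetric, irreflexive).
   Arrays x are functions 'v => 'v => real. *)

definition ap :: "('v \<Rightarrow> 'v \<Rightarrow> real) \<Rightarrow> ('v \<Rightarrow> 'v \<Rightarrow> real) \<Rightarrow> 'v \<Rightarrow> 'v \<Rightarrow> real" where
  "ap a p i j = a i j * p i j"

definition vs :: "('v::finite \<Rightarrow> 'v \<Rightarrow> real) \<Rightarrow> 'v \<Rightarrow> real" where
  "vs x i = (\<Sum>j\<in>UNIV. x i j)"

definition H_fn :: "('v::finite \<Rightarrow> 'v \<Rightarrow> real) \<Rightarrow> ('v \<Rightarrow> 'v \<Rightarrow> real) \<Rightarrow> ('v \<Rightarrow> 'v \<Rightarrow> real) \<Rightarrow> real" where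
  "H_fn a p x = (\<Sum>(i,j)\<in>{(i,j). x i j > 0}. ap a p i j * (x i j)^2 / (vs x i * vs x j))"

definition y_fn :: "('v::finite \<Rightarrow> 'v \<Rightarrow> real) \<Rightarrow> ('v \<Rightarrow> 'v \<Rightarrow> real) \<Rightarrow> ('v \<Rightarrow> 'v \<Rightarrow> real) \<Rightarrow> 'v \<Rightarrow> 'v \<Rightarrow> real" where
  "y_fn a p x i j = (if ap a p i j = 0 then 0 else ap a p i j * x i j / (vs x i * vs x j))"

definition F_fn :: "('v::finite \<Rightarrow> 'v \<Rightarrow> real) \<Rightarrow> ('v \<Rightarrow> 'v \<Rightarrow> real) \<Rightarrow> ('v \<Rightarrow> 'v \<Rightarrow> real) \<Rightarrow> 'v \<Rightarrow> 'v \<Rightarrow> real" where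
  "F_fn a p x i j = (if x i j = 0 then 0 else x i j * (y_fn a p x i j - H_fn a p x))"

definition in_Delta :: "('v::finite \<Rightarrow> 'v \<Rightarrow> bool) \<Rightarrow> ('v \<Rightarrow> 'v \<Rightarrow> real) \<Rightarrow> ('v \<Rightarrow> 'v \<Rightarrow> real) \<Rightarrow> real \<Rightarrow> ('v \<Rightarrow> 'v \<Rightarrow> real) \<Rightarrow> bool" where
  "in_Delta adj a p h1 x \<longleftrightarrow>
     (\<forall>i j. x i j = x j i \<and> x i j \<ge> 0) \<and>
     (\<forall>i j. \<not> adj i j \<longrightarrow> x i j = 0) \<and>
     (\<Sum>(i,j)\<in>UNIV. x i j) = 1 \<and>
     (\<Sum>(i,j)\<in>{(i,j). ap a p i j > 0}. x i j) \<ge> h1"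

definition in_boundary :: "('v::finite \<Rightarrow> 'v \<Rightarrow> bool) \<Rightarrow> ('v \<Rightarrow> 'v \<Rightarrow> real) \<Rightarrow> ('v \<Rightarrow> 'v \<Rightarrow> real) \<Rightarrow> ('v \<Rightarrow> 'v \<Rightarrow> real) \<Rightarrow> bool" where
  "in_boundary adj a p x \<longleftrightarrow>
     (\<exists>i. (\<exists>j. adj i j \<and> ap a p i j > 0) \<and> (\<Sum>j\<in>{j. ap a p i j > 0}. x i j) = 0)"

definition in_Gamma :: "('v::finite \<Rightarrow> 'v \<Rightarrow> bool) \<Rightarrow> ('v \<Rightarrow> 'v \<Rightarrow> real) \<Rightarrow> ('v \<Rightarrow> 'v \<Rightarrow> real) \<Rightarrow> real \<Rightarrow> ('v \<Rightarrow> 'v \<Rightarrow> real) \<Rightarrow> bool" where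
  "in_Gamma adj a p h1 x \<longleftrightarrow> in_Delta adj a p h1 x \<and> (\<forall>i j. F_fn a p x i j = 0)"

definition edges :: "('v \<Rightarrow> 'v \<Rightarrow> bool) \<Rightarrow> 'v set set" where
  "edges adj = {{i, j} | i j. adj i j}"

definition ends :: "'v set \<Rightarrow> 'v \<times> 'v" where
  "ends e = (SOME pr. e = {fst pr, snd pr})"

definition arr :: "('v \<Rightarrow> 'v \<Rightarrow> bool) \<Rightarrow> ('v set \<Rightarrow> real) \<Rightarrow> 'v \<Rightarrow> 'v \<Rightarrow> real" where
  "arr adj u i j = (if adj i j then u {i, j} else 0)"

(* the smooth formulas (H only over terms with a_ij p_ij > 0) in the unconstrained edge variables *)
definition Hs :: "('v::finite \<Rightarrow> 'v \<Rightarrow> bool) \<Rightarrow> ('v \<Rightarrow> 'v \<Rightarrow> real) \<Rightarrow> ('v \<Rightarrow> 'v \<Rightarrow> real) \<Rightarrow> ('v set \<Rightarrow> real) \<Rightarrow> real" where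
  "Hs adj a p u = (\<Sum>(i,j)\<in>{(i,j). ap a p i j > 0}.
      ap a p i j * (arr adj u i j)^2 / (vs (arr adj u) i * vs (arr adj u) j))"

definition ys :: "('v::finite \<Rightarrow> 'v \<Rightarrow> bool) \<Rightarrow> ('v \<Rightarrow> 'v \<Rightarrow> real) \<Rightarrow> ('v \<Rightarrow> 'v \<Rightarrow> real) \<Rightarrow> ('v set \<Rightarrow> real) \<Rightarrow> 'v \<Rightarrow> 'v \<Rightarrow> real" where
  "ys adj a p u i j = (if ap a p i j = 0 then 0
      else ap a p i j * arr adj u i j / (vs (arr adj u) i * vs (arr adj u) j))"

definition Fs :: "('v::finite \<Rightarrow> 'v \<Rightarrow> bool) \<Rightarrow> ('v \<Rightarrow> 'v \<Rightarrow> real) \<Rightarrow> ('v \<Rightarrow> 'v \<Rightarrow> real) \<Rightarrow> ('v set \<Rightarrow> real) \<Rightarrow> 'v \<Rightarrow> 'v \<Rightarrow> real" where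
  "Fs adj a p u i j = arr adj u i j * (ys adj a p u i j - Hs adj a p u)"

definition Fe :: "('v::finite \<Rightarrow> 'v \<Rightarrow> bool) \<Rightarrow> ('v \<Rightarrow> 'v \<Rightarrow> real) \<Rightarrow> ('v \<Rightarrow> 'v \<Rightarrow> real) \<Rightarrow> ('v set \<Rightarrow> real) \<Rightarrow> 'v set \<Rightarrow> real" where
  "Fe adj a p u e = Fs adj a p u (fst (ends e)) (snd (ends e))"

definition coords :: "('v \<Rightarrow> 'v \<Rightarrow> real) \<Rightarrow> 'v set \<Rightarrow> real" where
  "coords x e = x (fst (ends e)) (snd (ends e))"

definition jac :: "('v::finite \<Rightarrow> 'v \<Rightarrow> bool) \<Rightarrow> ('v \<Rightarrow> 'v \<Rightarrow> real) \<Rightarrow> ('v \<Rightarrow> 'v \<Rightarrow> real) \<Rightarrow> ('v \<Rightarrow> 'v \<Rightarrow> real) \<Rightarrow> 'v set \<Rightarrow> 'v set \<Rightarrow> real" where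
  "jac adj a p x e f = deriv (\<lambda>t. Fe adj a p ((coords x)(f := coords x f + t)) e) 0"

definition is_eigenvalue :: "('v \<Rightarrow> 'v \<Rightarrow> bool) \<Rightarrow> ('v set \<Rightarrow> 'v set \<Rightarrow> real) \<Rightarrow> complex \<Rightarrow> bool" where
  "is_eigenvalue adj M lam \<longleftrightarrow>
     (\<exists>v :: 'v set \<Rightarrow> complex. (\<exists>e\<in>edges adj. v e \<noteq> 0) \<and>
        (\<forall>e\<in>edges adj. (\<Sum>f\<in>edges adj. complex_of_real (M e f) * v f) = lam * v e))"

definition stable_eq :: "('v::finite \<Rightarrow> 'v \<Rightarrow> bool) \<Rightarrow> ('v \<Rightarrow> 'v \<Rightarrow> real) \<Rightarrow> ('v \<Rightarrow> 'v \<Rightarrow> real) \<Rightarrow> real \<Rightarrow> ('v \<Rightarrow> 'v \<Rightarrow> real) \<Rightarrow> bool" where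
  "stable_eq adj a p h1 x \<longleftrightarrow> in_Gamma adj a p h1 x \<and> \<not> in_boundary adj a p x \<and>
     (\<forall>lam. is_eigenvalue adj (jac adj a p x) lam \<longrightarrow> Re lam \<le> 0)"

definition is_subgraph :: "('v \<Rightarrow> 'v \<Rightarrow> bool) \<Rightarrow> ('v \<Rightarrow> 'v \<Rightarrow> bool) \<Rightarrow> bool" where
  "is_subgraph adj sg \<longleftrightarrow> (\<forall>i j. sg i j \<longrightarrow> adj i j) \<and> (\<forall>i j. sg i j \<longrightarrow> sg j i)"

definition nbrs :: "('v \<Rightarrow> 'v \<Rightarrow> bool) \<Rightarrow> 'v \<Rightarrow> 'v set" where
  "nbrs sg i = {j. sg i j}"

definition P_prop :: "('v \<Rightarrow> 'v \<Rightarrow> bool) \<Rightarrow> ('v \<Rightarrow> 'v \<Rightarrow> real) \<Rightarrow> ('v \<Rightarrow> 'v \<Rightarrow> real) \<Rightarrow> ('v \<Rightarrow> 'v \<Rightarrow> bool) \<Rightarrow> bool" where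
  "P_prop adj a p sg \<longleftrightarrow>
     (\<forall>i j k l. sg i j \<longrightarrow> sg k l \<longrightarrow> sg\<^sup>*\<^sup>* i k \<longrightarrow> ap a p i j = ap a p k l \<and> ap a p i j > 0) \<and>
     (\<forall>i k. sg\<^sup>*\<^sup>* i k \<longrightarrow> card (nbrs sg i) \<ge> 2 \<longrightarrow> card (nbrs sg k) \<ge> 2 \<longrightarrow> i = k) \<and>
     (\<forall>i. (\<exists>j. sg i j) \<longleftrightarrow> (\<exists>j. adj i j \<and> ap a p i j > 0))"

(* N is a valid choice of nuclei: exactly one per component, and it is the vertex with
   several neighbours if the component has one (otherwise any vertex of the component) *)
definition nucleus_set :: "('v \<Rightarrow> 'v \<Rightarrow> bool) \<Rightarrow> 'v set \<Rightarrow> bool" where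
  "nucleus_set sg N \<longleftrightarrow>
     (\<forall>v. \<exists>!i. i \<in> N \<and> sg\<^sup>*\<^sup>* v i) \<and>
     (\<forall>i\<in>N. card (nbrs sg i) \<ge> 2 \<or> (\<forall>k. sg\<^sup>*\<^sup>* i k \<longrightarrow> card (nbrs sg k) < 2))"

definition apN :: "('v \<Rightarrow> 'v \<Rightarrow> real) \<Rightarrow> ('v \<Rightarrow> 'v \<Rightarrow> real) \<Rightarrow> ('v \<Rightarrow> 'v \<Rightarrow> bool) \<Rightarrow> 'v \<Rightarrow> real" where
  "apN a p sg i = (if \<exists>k. sg i k then ap a p i (SOME k. sg i k) else 0)"

definition in_GammaG :: "('v::finite \<Rightarrow> 'v \<Rightarrow> bool) \<Rightarrow> ('v \<Rightarrow> 'v \<Rightarrow> real) \<Rightarrow> ('v \<Rightarrow> 'v \<Rightarrow> real) \<Rightarrow> real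
     \<Rightarrow> ('v \<Rightarrow> 'v \<Rightarrow> bool) \<Rightarrow> 'v set \<Rightarrow> ('v \<Rightarrow> 'v \<Rightarrow> real) \<Rightarrow> bool" where
  "in_GammaG adj a p h1 sg N q \<longleftrightarrow>
     in_Delta adj a p h1 q \<and> (\<forall>i j. (q i j > 0) = sg i j) \<and>
     (\<forall>i\<in>N. vs q i = apN a p sg i / (2 * (\<Sum>j\<in>N. apN a p sg j))) \<and>
     (\<forall>i\<in>N. (\<forall>j. sg i j \<longrightarrow> q i j > 0) \<and> (\<Sum>j\<in>{j. sg i j}. q i j) = vs q i)"

end

theory Submission
  imports Defs
begin

text \<open>Under \<open>P\<^sub>\<G>\<close> every component of \<open>\<G>\<close> is a star centred at its nucleus, so
  each edge of \<open>\<G>\<close> joins a nucleus \<open>c\<close> to a leaf \<open>l\<close> with \<open>q\<^sub>l = q\<^sub>c\<^sub>l\<close>, and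
  \<open>y\<^sub>c\<^sub>l = (ap)\<^sub>c / q\<^sub>c\<close>. Hence \<open>F(q) = 0\<close>, i.e.\ \<open>y = H\<close> on the support, says that
  \<open>q\<^sub>c\<close> is proportional to \<open>(ap)\<^sub>c\<close>; since every edge has exactly one end in \<open>N\<close>,
  the \<open>q\<^sub>c\<close> add up to \<open>1/2\<close>, which forces \<open>H = 2 \<Sum>\<^sub>j (ap)\<^sub>j\<close> and gives \<open>\<Gamma>\<^sub>\<G>\<close>.

  At such an equilibrium the row of \<open>J\<close> of an edge outside the support is \<open>-H\<close> times a unit
  row, while on the support \<open>J = -H D W W\<^sup>T\<close> with \<open>D = diag(q\<^sub>e) > 0\<close> and
  \<open>W\<^sub>e\<^sub>c = [c \<in> e] / \<surd>q\<^sub>c\<close> for nuclei \<open>c\<close>. An eigenvector \<open>v\<close> for \<open>\<lambda> \<noteq> -H\<close> vanishes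
  off the support, and then \<open>Re \<lambda> \<Sum>\<^sub>e |v\<^sub>e|\<^sup>2 / q\<^sub>e = - H \<Sum>\<^sub>c |(W\<^sup>T v)\<^sub>c|\<^sup>2 \<le> 0\<close>.\<close>

section \<open>Eigenvalues of matrices of the form \<open>-D G\<close> with \<open>G\<close> a Gram matrix\<close>

lemma Re_eigenvalue_nonpos_scaled_Gram:
  fixes d g :: "_ \<Rightarrow> real" and w :: "'e \<Rightarrow> 'x \<Rightarrow> real" and v :: "'e \<Rightarrow> complex"
  assumes "finite S" and "finite X"
    and d_pos: "\<And>e. e \<in> S \<Longrightarrow> 0 < d e" and g_nonneg: "\<And>x. x \<in> X \<Longrightarrow> 0 \<le> g x"
    and eigen: "\<And>e. e \<in> S \<Longrightarrow>
      (\<Sum>f\<in>S. complex_of_real (- d e * (\<Sum>x\<in>X. g x * w e x * w f x)) * v f) = lam * v e"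
    and nonzero: "\<exists>e\<in>S. v e \<noteq> 0"
  shows "Re lam \<le> 0"
proof -
  define s where "s x = (\<Sum>f\<in>S. complex_of_real (w f x) * v f)" for x
  have row: "lam * v e = - complex_of_real (d e) * (\<Sum>x\<in>X. complex_of_real (g x * w e x) * s x)"
    if "e \<in> S" for e
  proof -
    have "lam * v e = (\<Sum>f\<in>S. \<Sum>x\<in>X.
        - complex_of_real (d e) * (complex_of_real (g x * w e x) * (complex_of_real (w f x) * v f)))"
      unfolding eigen[OF that, symmetric]
      by (simp add: sum_distrib_left sum_distrib_right sum_negf mult.assoc)
    also have "\<dots> = - complex_of_real (d e) * (\<Sum>x\<in>X. complex_of_real (g x * w e x) * s x)"
      unfolding s_def by (subst sum.swap) (simp add: sum_distrib_left sum_negf)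
    finally show ?thesis .
  qed
  define A where "A = (\<Sum>e\<in>S. (cmod (v e))\<^sup>2 / d e)"
  define B where "B = (\<Sum>x\<in>X. g x * (cmod (s x))\<^sup>2)"
  \<comment> \<open>Pairing the eigenvector equation with \<open>cnj (v e) / d e\<close> turns it into
    \<open>lam * A = - B\<close>.\<close>
  have "lam * complex_of_real A = (\<Sum>e\<in>S. cnj (v e) * (lam * v e) / complex_of_real (d e))"
    unfolding A_def of_real_sum sum_distrib_left
    by (intro sum.cong refl) (simp add: complex_norm_square[symmetric] mult_ac)
  also have "\<dots> = - (\<Sum>x\<in>X. complex_of_real (g x) * s x *
      (\<Sum>e\<in>S. complex_of_real (w e x) * cnj (v e)))"
  proof -
    have "cnj (v e) * (lam * v e) / complex_of_real (d e)
        = - (\<Sum>x\<in>X. complex_of_real (g x) * s x * (complex_of_real (w e x) * cnj (v e)))"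
      if "e \<in> S" for e
      using d_pos[OF that] unfolding row[OF that]
      by (simp add: sum_distrib_left sum_negf field_simps)
    then show ?thesis
      by (simp add: sum_negf sum_distrib_left sum.swap[of _ X])
  qed
  also have "\<dots> = - complex_of_real B"
  proof -
    have "(\<Sum>e\<in>S. complex_of_real (w e x) * cnj (v e)) = cnj (s x)" for x
      unfolding s_def by simp
    then show ?thesis
      unfolding B_def of_real_sum of_real_mult complex_norm_square by (simp add: mult.assoc)
  qed
  finally have "Re (lam * complex_of_real A) = Re (- complex_of_real B)" by simp
  then have "Re lam * A = - B" by simp
  moreover have "0 \<le> B"
    unfolding B_def using g_nonneg by (intro sum_nonneg mult_nonneg_nonneg) auto
  moreover have "0 < A"
  proof -
    obtain e where "e \<in> S" "v e \<noteq> 0" using nonzero by blast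
    then show ?thesis
      unfolding A_def using d_pos \<open>finite S\<close>
      by (intro sum_pos2[of S e]) (auto intro: divide_nonneg_pos)
  qed
  ultimately show ?thesis by (smt (verit) mult_pos_pos)
qed

lemma Re_eigenvalue_nonpos_block_Gram:
  fixes M :: "'e \<Rightarrow> 'e \<Rightarrow> real" and d g :: "_ \<Rightarrow> real" and w :: "'e \<Rightarrow> 'x \<Rightarrow> real"
    and v :: "'e \<Rightarrow> complex"
  assumes "finite E" "S \<subseteq> E" "finite X" "0 \<le> c"
    and scalar_rows: "\<And>e f. e \<in> E - S \<Longrightarrow> f \<in> E \<Longrightarrow> M e f = (if e = f then - c else 0)"
    and Gram_block: "\<And>e f. e \<in> S \<Longrightarrow> f \<in> S \<Longrightarrow> M e f = - d e * (\<Sum>x\<in>X. g x * w e x * w f x)"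
    and d_pos: "\<And>e. e \<in> S \<Longrightarrow> 0 < d e" and g_nonneg: "\<And>x. x \<in> X \<Longrightarrow> 0 \<le> g x"
    and eigen: "\<And>e. e \<in> E \<Longrightarrow> (\<Sum>f\<in>E. complex_of_real (M e f) * v f) = lam * v e"
    and nonzero: "\<exists>e\<in>E. v e \<noteq> 0"
  shows "Re lam \<le> 0"
proof (cases "lam = - complex_of_real c")
  case True
  then show ?thesis using \<open>0 \<le> c\<close> by simp
next
  case False
  have vanish: "v e = 0" if e: "e \<in> E - S" for e
  proof -
    have "lam * v e = (\<Sum>f\<in>E. if f = e then - complex_of_real c * v e else 0)"
      unfolding eigen[symmetric, OF DiffD1[OF e]]
      by (intro sum.cong refl) (simp add: scalar_rows[OF e])
    also have "\<dots> = - complex_of_real c * v e" using e \<open>finite E\<close> by simp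
    finally have "(lam + complex_of_real c) * v e = 0" by (simp add: algebra_simps)
    then show ?thesis using False by (metis add_eq_0_iff2 mult_eq_0_iff)
  qed
  show ?thesis
  proof (rule Re_eigenvalue_nonpos_scaled_Gram)
    show "finite S" using \<open>finite E\<close> \<open>S \<subseteq> E\<close> by (rule finite_subset[rotated])
    show "(\<Sum>f\<in>S. complex_of_real (- d e * (\<Sum>x\<in>X. g x * w e x * w f x)) * v f) = lam * v e"
      if "e \<in> S" for e
    proof -
      have "(\<Sum>f\<in>S. complex_of_real (M e f) * v f) = lam * v e"
        using that \<open>S \<subseteq> E\<close> vanish \<open>finite E\<close>
        by (subst eigen[symmetric]) (auto intro!: sum.mono_neutral_left)
      then show ?thesis using that by (simp add: Gram_block)
    qed
    show "\<exists>e\<in>S. v e \<noteq> 0" using nonzero vanish by blast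
  qed (use \<open>finite X\<close> d_pos g_nonneg in auto)
qed

lemma sum_UNIV_pairs:
  "(\<Sum>(i, j)\<in>(UNIV :: ('v::finite \<times> 'v) set). g i j) = (\<Sum>i\<in>UNIV. \<Sum>j\<in>UNIV. g i j)"
  by (metis UNIV_Times_UNIV sum.cartesian_product)

lemma vs_add_scaled: "vs (\<lambda>i j. x i j + t * y i j) i = vs x i + t * vs y i"
  unfolding vs_def by (simp add: sum.distrib sum_distrib_left)

lemma ends_doubleton: "ends {i, j} = (i, j) \<or> ends {i, j} = (j, i)"
proof -
  have "{i, j} = {fst (ends {i, j}), snd (ends {i, j})}"
    unfolding ends_def by (rule someI[of "\<lambda>pr. {i, j} = {fst pr, snd pr}" "(i, j)"]) simp
  then show ?thesis by (cases "ends {i, j}") (auto simp: doubleton_eq_iff)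
qed

lemma DERIV_square_over_product:
  fixes w x y A B cA cB :: real
  assumes "A \<noteq> 0" "B \<noteq> 0"
  shows "((\<lambda>t. w * (x + t * y)\<^sup>2 / ((A + t * cA) * (B + t * cB))) has_field_derivative
          w * (2 * x * y * (A * B) - x\<^sup>2 * (cA * B + A * cB)) / (A * B)\<^sup>2) (at 0)"
  by (rule derivative_eq_intros refl | simp add: assms)+
     (use assms in \<open>simp add: field_simps power2_eq_square\<close>)

lemma DERIV_linear_over_product:
  fixes w x y A B cA cB :: real
  assumes "A \<noteq> 0" "B \<noteq> 0"
  shows "((\<lambda>t. w * (x + t * y) / ((A + t * cA) * (B + t * cB))) has_field_derivative
          w * (y * (A * B) - x * (cA * B + A * cB)) / (A * B)\<^sup>2) (at 0)"
  by (rule derivative_eq_intros refl | simp add: assms)+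
     (use assms in \<open>simp add: field_simps power2_eq_square\<close>)

section \<open>Star forests\<close>

locale star_forest =
  fixes sg :: "'v::finite \<Rightarrow> 'v \<Rightarrow> bool" and N :: "'v set"
  assumes sg_sym: "\<And>i j. sg i j \<Longrightarrow> sg j i"
    and sg_irrefl: "\<And>i. \<not> sg i i"
    and one_centre:
      "\<And>i k. sg\<^sup>*\<^sup>* i k \<Longrightarrow> 2 \<le> card (nbrs sg i) \<Longrightarrow> 2 \<le> card (nbrs sg k) \<Longrightarrow> i = k"
    and nuclei: "nucleus_set sg N"
begin

lemma nucleus_unique: "\<exists>!c. c \<in> N \<and> sg\<^sup>*\<^sup>* v c"
  using nuclei unfolding nucleus_set_def by blast

lemma two_le_card_nbrs: "sg i j \<Longrightarrow> sg i k \<Longrightarrow> j \<noteq> k \<Longrightarrow> 2 \<le> card (nbrs sg i)"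
  using card_mono[of "nbrs sg i" "{j, k}"] unfolding nbrs_def by auto

lemma nucleus_nbr_is_leaf:
  assumes "c \<in> N" "sg c l"
  shows "sg l j \<longleftrightarrow> j = c"
proof -
  have "sg\<^sup>*\<^sup>* c l" using assms(2) by auto
  have "card (nbrs sg l) < 2"
  proof (cases "2 \<le> card (nbrs sg c)")
    case True
    show ?thesis
    proof (rule ccontr)
      assume "\<not> card (nbrs sg l) < 2"
      then have "c = l" using one_centre[OF \<open>sg\<^sup>*\<^sup>* c l\<close> True] by simp
      then show False using assms(2) sg_irrefl by simp
    qed
  next
    case False
    then show ?thesis using nuclei assms(1) \<open>sg\<^sup>*\<^sup>* c l\<close> unfolding nucleus_set_def by auto
  qed
  then show ?thesis using two_le_card_nbrs[of l c] sg_sym[OF assms(2)] by force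
qed

lemma component_of_nucleus:
  assumes "c \<in> N" "sg\<^sup>*\<^sup>* c v"
  shows "v = c \<or> sg c v"
  using assms(2)
proof (induction rule: rtranclp_induct)
  case (step x y)
  then show ?case using nucleus_nbr_is_leaf[OF assms(1)] by blast
qed simp

lemma edge_has_nucleus:
  assumes "sg i j"
  shows "i \<in> N \<or> j \<in> N"
proof -
  obtain c where c: "c \<in> N" "sg\<^sup>*\<^sup>* i c" using nucleus_unique[of i] by blast
  have "symp sg" using sg_sym by (rule sympI)
  then have "sg\<^sup>*\<^sup>* c i" using c(2) by (metis symp_rtranclp sympD)
  then have "i = c \<or> sg c i" using component_of_nucleus[OF c(1)] by blast
  then show ?thesis using nucleus_nbr_is_leaf[OF c(1), of i j] assms c(1) by auto
qed

lemma edge_not_two_nuclei: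
  assumes "sg i j" "i \<in> N"
  shows "j \<notin> N"
proof
  assume "j \<in> N"
  have "sg\<^sup>*\<^sup>* i j" "sg\<^sup>*\<^sup>* i i" using assms(1) by auto
  then have "i = j" using nucleus_unique[of i] assms(2) \<open>j \<in> N\<close> by blast
  then show False using assms(1) sg_irrefl by simp
qed

end

locale star_weighting = star_forest sg N for sg :: "'v::finite \<Rightarrow> 'v \<Rightarrow> bool" and N +
  fixes q :: "'v \<Rightarrow> 'v \<Rightarrow> real"
  assumes q_sym: "q i j = q j i" and q_nonneg: "0 \<le> q i j"
    and q_pos_iff: "0 < q i j \<longleftrightarrow> sg i j"
    and q_total: "(\<Sum>(i, j)\<in>UNIV. q i j) = 1"
begin

lemma q_eq_0: "\<not> sg i j \<Longrightarrow> q i j = 0"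
  using q_pos_iff[of i j] q_nonneg[of i j] by linarith

lemma vs_nonneg: "0 \<le> vs q i"
  unfolding vs_def by (simp add: q_nonneg sum_nonneg)

lemma vs_pos: "sg i j \<Longrightarrow> 0 < vs q i"
  using member_le_sum[of j UNIV "q i"] q_nonneg q_pos_iff[of i j] unfolding vs_def by fastforce

lemma vs_isolated: "\<not> (\<exists>j. sg i j) \<Longrightarrow> vs q i = 0"
  unfolding vs_def using q_eq_0 by simp

lemma vs_eq_sum_nbrs: "vs q i = (\<Sum>j\<in>{j. sg i j}. q i j)"
  unfolding vs_def by (rule sum.mono_neutral_right) (auto simp: q_eq_0)

lemma vs_leaf:
  assumes "c \<in> N" "sg c l"
  shows "vs q l = q c l"
proof -
  have "vs q l = (\<Sum>j\<in>UNIV. if j = c then q l j else 0)"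
    unfolding vs_def by (rule sum.cong) (auto simp: q_eq_0 nucleus_nbr_is_leaf[OF assms])
  then show ?thesis using q_sym by simp
qed

text \<open>Every edge has exactly one endpoint in \<open>N\<close>, so summing the masses \<open>vs q c\<close> of the
  nuclei counts every edge once, i.e.\ half of the total mass.\<close>

lemma sum_vs_nuclei: "(\<Sum>c\<in>N. vs q c) = 1 / 2"
proof -
  have split: "q i j = (if i \<in> N then q i j else 0) + (if j \<in> N then q i j else 0)" for i j
  proof (cases "sg i j")
    case True
    then show ?thesis using edge_has_nucleus[OF True] edge_not_two_nuclei[OF True] by auto
  qed (simp add: q_eq_0)
  have "1 = (\<Sum>i\<in>UNIV. \<Sum>j\<in>UNIV. q i j)" using q_total sum_UNIV_pairs[of q] by simp
  also have "\<dots> = (\<Sum>i\<in>UNIV. \<Sum>j\<in>UNIV. if i \<in> N then q i j else 0)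
      + (\<Sum>i\<in>UNIV. \<Sum>j\<in>UNIV. if j \<in> N then q i j else 0)"
    by (subst split) (simp add: sum.distrib)
  also have "(\<Sum>i\<in>UNIV. \<Sum>j\<in>UNIV. if j \<in> N then q i j else 0)
      = (\<Sum>j\<in>UNIV. \<Sum>i\<in>UNIV. if j \<in> N then q j i else 0)"
    by (subst sum.swap, intro sum.cong refl) (metis q_sym)
  also have "(\<Sum>i\<in>UNIV. \<Sum>j\<in>UNIV. if i \<in> N then q i j else 0) = (\<Sum>c\<in>N. vs q c)"
    unfolding vs_def by (simp add: if_distrib[of "sum _"] sum.If_cases cong: if_cong)
  finally show ?thesis by (simp add: vs_def sum.If_cases)
qed

end

section \<open>The equilibria with support \<open>\<G>\<close>\<close>

locale star_network = star_weighting sg N q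
  for sg :: "'v::finite \<Rightarrow> 'v \<Rightarrow> bool" and N and q +
  fixes adj :: "'v \<Rightarrow> 'v \<Rightarrow> bool" and a p :: "'v \<Rightarrow> 'v \<Rightarrow> real"
  assumes adj_sym: "\<And>i j. adj i j \<Longrightarrow> adj j i" and adj_irrefl: "\<And>i. \<not> adj i i"
    and sg_adj: "\<And>i j. sg i j \<Longrightarrow> adj i j"
    and ap_sym: "ap a p i j = ap a p j i" and ap_nonneg: "0 \<le> ap a p i j"
    and ap_adj: "0 < ap a p i j \<Longrightarrow> adj i j"
    and ap_somewhere: "\<exists>i j. 0 < ap a p i j"
    and ap_const_on_components:
      "\<And>i j k l. sg i j \<Longrightarrow> sg k l \<Longrightarrow> sg\<^sup>*\<^sup>* i k \<Longrightarrow> ap a p i j = ap a p k l \<and> 0 < ap a p i j"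
    and sg_covers: "\<And>i. (\<exists>j. sg i j) \<longleftrightarrow> (\<exists>j. adj i j \<and> 0 < ap a p i j)"
begin

lemma ap_pos: "sg i j \<Longrightarrow> 0 < ap a p i j"
  using ap_const_on_components[of i j i j] by auto

lemma vs_pos_if_ap_pos: "0 < ap a p i j \<Longrightarrow> 0 < vs q i"
  using sg_covers ap_adj vs_pos by blast

lemma apN_nucleus:
  assumes "c \<in> N" "sg c l"
  shows "apN a p sg c = ap a p c l"
proof -
  have ex: "\<exists>k. sg c k" using assms(2) by blast
  then have "sg c (SOME k. sg c k)" by (rule someI_ex)
  then have "ap a p c (SOME k. sg c k) = ap a p c l"
    using ap_const_on_components[OF _ assms(2)] by blast
  then show ?thesis unfolding apN_def using ex by simp
qed

lemma apN_nonneg: "0 \<le> apN a p sg c"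
  unfolding apN_def using ap_nonneg by simp

lemma exists_nucleus_edge: "\<exists>c l. c \<in> N \<and> sg c l"
proof -
  obtain i j where "0 < ap a p i j" using ap_somewhere by blast
  then obtain j' where "sg i j'" using sg_covers ap_adj by blast
  then show ?thesis using edge_has_nucleus[of i j'] sg_sym by blast
qed

text \<open>The common value of \<open>y\<close> on the edges of \<open>sg\<close> and of \<open>H\<close> at the points of
  \<open>\<Gamma>\<^sub>\<G>\<close>.\<close>

definition H_star :: real where
  "H_star = 2 * (\<Sum>c\<in>N. apN a p sg c)"

lemma H_star_pos: "0 < H_star"
proof -
  obtain c l where cl: "c \<in> N" "sg c l" using exists_nucleus_edge by blast
  then have "0 < apN a p sg c" using apN_nucleus ap_pos by simp
  then have "0 < (\<Sum>c\<in>N. apN a p sg c)"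
    using cl(1) by (intro sum_pos2[of N c]) (auto simp: apN_nonneg)
  then show ?thesis unfolding H_star_def by simp
qed

lemma y_nucleus_edge:
  assumes "c \<in> N" "sg c l"
  shows "y_fn a p q c l = apN a p sg c / vs q c" "y_fn a p q l c = apN a p sg c / vs q c"
  using assms(2) ap_pos[OF assms(2)] vs_leaf[OF assms] q_pos_iff[of c l] vs_pos[OF assms(2)]
  unfolding y_fn_def apN_nucleus[OF assms] by (simp_all add: ap_sym[of l c] q_sym[of l c])

lemma H_eq_sum_y: "H_fn a p q = (\<Sum>(i, j)\<in>UNIV. y_fn a p q i j * q i j)"
proof -
  have "H_fn a p q = (\<Sum>(i, j)\<in>{(i, j). sg i j}. y_fn a p q i j * q i j)"
    unfolding H_fn_def q_pos_iff using ap_pos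
    by (intro sum.cong refl) (auto simp: y_fn_def power2_eq_square)
  also have "\<dots> = (\<Sum>(i, j)\<in>UNIV. y_fn a p q i j * q i j)"
    by (rule sum.mono_neutral_left) (use q_eq_0 in fastforce)+
  finally show ?thesis .
qed

lemma H_eq_if_y_const:
  assumes "\<And>i j. sg i j \<Longrightarrow> y_fn a p q i j = K"
  shows "H_fn a p q = K"
proof -
  have yq: "y_fn a p q i j * q i j = K * q i j" for i j
    by (cases "sg i j") (simp_all add: assms q_eq_0)
  have "H_fn a p q = (\<Sum>(i, j)\<in>UNIV. K * q i j)"
    unfolding H_eq_sum_y by (rule sum.cong) (auto simp: yq)
  then show ?thesis
    using q_total by (simp add: sum_distrib_left[symmetric] case_prod_unfold)
qed

lemma F_zero_iff_y_eq_H: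
  "(\<forall>i j. F_fn a p q i j = 0) \<longleftrightarrow> (\<forall>i j. sg i j \<longrightarrow> y_fn a p q i j = H_fn a p q)"
proof -
  have "F_fn a p q i j = 0 \<longleftrightarrow> (sg i j \<longrightarrow> y_fn a p q i j = H_fn a p q)" for i j
    using q_eq_0[of i j] q_pos_iff[of i j] unfolding F_fn_def by auto
  then show ?thesis by blast
qed

text \<open>If \<open>y\<close> is constant on the edges, then on every edge \<open>{c, l}\<close> at a nucleus
  \<open>c\<close> that constant is \<open>apN c / vs q c\<close>; since the masses \<open>vs q c\<close> of the nuclei
  sum to \<open>1/2\<close>, it must be \<open>H_star\<close>.\<close>

lemma y_const_imp_vs_nuclei:
  assumes y_const: "\<And>i j. sg i j \<Longrightarrow> y_fn a p q i j = K"
  shows "K = H_star" and "\<And>c. c \<in> N \<Longrightarrow> vs q c = apN a p sg c / H_star"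
proof -
  obtain c0 l0 where cl0: "c0 \<in> N" "sg c0 l0" using exists_nucleus_edge by blast
  have "0 < K"
    using y_const[OF cl0(2)] y_nucleus_edge(1)[OF cl0] apN_nucleus[OF cl0] ap_pos[OF cl0(2)]
      vs_pos[OF cl0(2)] by (metis divide_pos_pos)
  have vs_K: "vs q c = apN a p sg c / K" if "c \<in> N" for c
  proof (cases "\<exists>l. sg c l")
    case True
    then obtain l where "sg c l" by blast
    then show ?thesis
      using y_const y_nucleus_edge(1)[OF that] vs_pos \<open>0 < K\<close> by (auto simp: field_simps)
  next
    case False
    then show ?thesis using vs_isolated by (simp add: apN_def)
  qed
  have "1 / 2 = (\<Sum>c\<in>N. apN a p sg c) / K"
    unfolding sum_vs_nuclei[symmetric] by (simp add: vs_K sum_divide_distrib)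
  then show "K = H_star" unfolding H_star_def using \<open>0 < K\<close> by (simp add: field_simps)
  then show "\<And>c. c \<in> N \<Longrightarrow> vs q c = apN a p sg c / H_star" using vs_K by simp
qed

lemma y_eq_H_star_if_vs_nuclei:
  assumes vs_nuclei: "\<And>c. c \<in> N \<Longrightarrow> vs q c = apN a p sg c / H_star" and "sg i j"
  shows "y_fn a p q i j = H_star"
proof -
  have "y_fn a p q c l = H_star \<and> y_fn a p q l c = H_star" if "c \<in> N" "sg c l" for c l
  proof -
    have "0 < apN a p sg c" using apN_nucleus[OF that] ap_pos[OF that(2)] by simp
    then show ?thesis using y_nucleus_edge[OF that] vs_nuclei[OF that(1)] H_star_pos by simp
  qed
  then show ?thesis using edge_has_nucleus[OF \<open>sg i j\<close>] \<open>sg i j\<close> sg_sym by blast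
qed

lemma in_Gamma_iff_in_GammaG:
  assumes "in_Delta adj a p h1 q"
  shows "in_Gamma adj a p h1 q \<longleftrightarrow> in_GammaG adj a p h1 sg N q"
proof
  assume "in_Gamma adj a p h1 q"
  then have "\<And>i j. sg i j \<Longrightarrow> y_fn a p q i j = H_fn a p q"
    unfolding in_Gamma_def F_zero_iff_y_eq_H by blast
  then have "\<forall>c\<in>N. vs q c = apN a p sg c / H_star"
    using y_const_imp_vs_nuclei(2) by blast
  moreover have "\<forall>i\<in>N. (\<forall>j. sg i j \<longrightarrow> 0 < q i j) \<and> (\<Sum>j\<in>{j. sg i j}. q i j) = vs q i"
    by (simp add: q_pos_iff vs_eq_sum_nbrs[symmetric])
  ultimately show "in_GammaG adj a p h1 sg N q"
    unfolding in_GammaG_def H_star_def using assms q_pos_iff by (intro conjI) blast+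
next
  assume "in_GammaG adj a p h1 sg N q"
  then have "\<And>c. c \<in> N \<Longrightarrow> vs q c = apN a p sg c / H_star"
    unfolding in_GammaG_def H_star_def by blast
  then have "\<And>i j. sg i j \<Longrightarrow> y_fn a p q i j = H_star"
    by (rule y_eq_H_star_if_vs_nuclei)
  moreover from this have "H_fn a p q = H_star" by (rule H_eq_if_y_const)
  ultimately have "\<forall>i j. F_fn a p q i j = 0"
    unfolding F_zero_iff_y_eq_H by simp
  then show "in_Gamma adj a p h1 q"
    unfolding in_Gamma_def using assms by blast
qed

lemma not_in_boundary: "\<not> in_boundary adj a p q"
proof
  assume "in_boundary adj a p q"
  then obtain i where i: "\<exists>j. adj i j \<and> 0 < ap a p i j"
      "(\<Sum>j\<in>{j. 0 < ap a p i j}. q i j) = 0"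
    unfolding in_boundary_def by blast
  obtain j where "sg i j" using i(1) sg_covers by blast
  have "q i j \<le> (\<Sum>j\<in>{j. 0 < ap a p i j}. q i j)"
    by (rule member_le_sum) (auto simp: q_nonneg ap_pos[OF \<open>sg i j\<close>])
  then show False using i(2) q_pos_iff[of i j] \<open>sg i j\<close> by linarith
qed

end

lemma star_network_if_P_prop:
  fixes adj sg :: "'v::finite \<Rightarrow> 'v \<Rightarrow> bool"
  assumes adj: "\<And>i j. adj i j \<Longrightarrow> adj j i" "\<And>i. \<not> adj i i"
    and ap: "\<And>i j. ap a p i j = ap a p j i" "\<And>i j. 0 \<le> ap a p i j"
      "\<And>i j. 0 < ap a p i j \<Longrightarrow> adj i j" "\<exists>i j. 0 < ap a p i j"
    and sub: "is_subgraph adj sg" and P: "P_prop adj a p sg" and nuc: "nucleus_set sg N"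
    and q: "in_Delta adj a p h1 q" "\<And>i j. 0 < q i j \<longleftrightarrow> sg i j"
  shows "star_network sg N q adj a p"
proof unfold_locales
  show "sg i j \<Longrightarrow> sg j i" "sg i j \<Longrightarrow> adj i j" for i j
    using sub unfolding is_subgraph_def by blast+
  show "\<not> sg i i" for i using sub adj(2) unfolding is_subgraph_def by blast
  show "sg\<^sup>*\<^sup>* i k \<Longrightarrow> 2 \<le> card (nbrs sg i) \<Longrightarrow> 2 \<le> card (nbrs sg k) \<Longrightarrow> i = k" for i k
    using P unfolding P_prop_def by blast
  show "sg i j \<Longrightarrow> sg k l \<Longrightarrow> sg\<^sup>*\<^sup>* i k \<Longrightarrow> ap a p i j = ap a p k l \<and> 0 < ap a p i j"
    for i j k l using P unfolding P_prop_def by blast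
  show "(\<exists>j. sg i j) \<longleftrightarrow> (\<exists>j. adj i j \<and> 0 < ap a p i j)" for i
    using P unfolding P_prop_def by blast
  show "q i j = q j i" "0 \<le> q i j" for i j using q(1) unfolding in_Delta_def by blast+
  show "(\<Sum>(i, j)\<in>UNIV. q i j) = 1" using q(1) unfolding in_Delta_def by blast
qed (use adj ap nuc q(2) in auto)

section \<open>The Jacobian at an equilibrium\<close>

context star_network
begin

definition edge_dir :: "'v set \<Rightarrow> 'v \<Rightarrow> 'v \<Rightarrow> real" where
  "edge_dir f i j = (if adj i j \<and> {i, j} = f then 1 else 0)"

lemma coords_doubleton: "coords q {i, j} = q i j"
  unfolding coords_def using ends_doubleton[of i j] q_sym by auto

lemma arr_update_coord:
  "arr adj ((coords q)(f := coords q f + t)) = (\<lambda>i j. q i j + t * edge_dir f i j)"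
  using q_eq_0 sg_adj unfolding arr_def edge_dir_def by (fastforce simp: coords_doubleton)

lemma ends_edge:
  assumes "e \<in> edges adj" "ends e = (i, j)"
  shows "adj i j" "e = {i, j}"
proof -
  obtain k l where "e = {k, l}" "adj k l" using assms(1) unfolding edges_def by blast
  then show "adj i j" "e = {i, j}" using ends_doubleton[of k l] assms(2) adj_sym by auto
qed

lemma edge_dir_edge:
  assumes "f \<in> edges adj"
  shows "edge_dir f i j = (if i \<in> f \<and> j \<in> f \<and> i \<noteq> j then 1 else 0)"
proof -
  obtain k l where f: "f = {k, l}" "adj k l" using assms unfolding edges_def by blast
  then have "k \<noteq> l" using adj_irrefl by auto
  then show ?thesis unfolding edge_dir_def f(1) using f(2) adj_sym by (auto simp: doubleton_eq_iff)
qed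

lemma vs_edge_dir:
  assumes "f \<in> edges adj"
  shows "vs (edge_dir f) i = (if i \<in> f then 1 else 0)"
proof (cases "i \<in> f")
  case True
  obtain k l where f: "f = {k, l}" "adj k l" using assms unfolding edges_def by blast
  then obtain o' where o': "f = {i, o'}" "i \<noteq> o'" using True adj_irrefl by auto
  have "vs (edge_dir f) i = (\<Sum>j\<in>UNIV. if j = o' then 1 else 0)"
    unfolding vs_def edge_dir_edge[OF assms] by (rule sum.cong) (use o' in auto)
  then show ?thesis using True by simp
next
  case False
  then show ?thesis unfolding vs_def edge_dir_edge[OF assms] by simp
qed

lemma edge_dir_ends:
  assumes "e \<in> edges adj" "ends e = (i, j)"
  shows "edge_dir f i j = (if e = f then 1 else 0)"
  unfolding edge_dir_def using ends_edge[OF assms] by auto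

lemma positive_edge_at_nucleus:
  assumes "e \<in> edges adj" "0 < coords q e"
  obtains c l where "c \<in> N" "sg c l" "e = {c, l}"
proof -
  obtain i j where ij: "ends e = (i, j)" by fastforce
  then have "sg i j" "e = {i, j}"
    using assms(2) q_pos_iff ends_edge[OF assms(1)] unfolding coords_def by auto
  then show ?thesis using that edge_has_nucleus sg_sym by (metis insert_commute)
qed

lemma positive_edge_through_leaf:
  assumes "f \<in> edges adj" "0 < coords q f" "c \<in> N" "sg c l" "l \<in> f"
  shows "f = {c, l}"
proof -
  obtain c' l' where f: "c' \<in> N" "sg c' l'" "f = {c', l'}"
    using positive_edge_at_nucleus[OF assms(1,2)] by blast
  have "l \<noteq> c'" using edge_not_two_nuclei[OF assms(4,3)] f(1) by blast
  then have "l = l'" using assms(5) f(3) by auto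
  then have "c' = c" using nucleus_nbr_is_leaf[OF assms(3,4)] f(2) sg_sym by blast
  then show ?thesis using f(3) \<open>l = l'\<close> by simp
qed

lemma edge_dir_nonzero_imp_sg:
  assumes "f \<in> edges adj" "0 < coords q f" "edge_dir f i j \<noteq> 0"
  shows "sg i j"
proof -
  obtain c l where "sg c l" "f = {c, l}" using positive_edge_at_nucleus[OF assms(1,2)] .
  moreover have "{i, j} = f" using assms(3) unfolding edge_dir_def by (auto split: if_splits)
  ultimately show ?thesis using sg_sym by (auto simp: doubleton_eq_iff)
qed

lemma sum_vs_edge_dir:
  assumes "f \<in> edges adj"
  shows "(\<Sum>i\<in>UNIV. vs (edge_dir f) i) = 2"
proof -
  obtain k l where f: "f = {k, l}" "adj k l" using assms unfolding edges_def by blast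
  have "(\<Sum>i\<in>UNIV. vs (edge_dir f) i) = real (card f)"
    unfolding vs_edge_dir[OF assms] by (simp add: sum.If_cases)
  then show ?thesis using f adj_irrefl by (cases "k = l") auto
qed

lemma sum_q_vs_edge_dir:
  assumes "f \<in> edges adj" "0 < coords q f"
  shows "(\<Sum>i\<in>UNIV. \<Sum>j\<in>UNIV. q i j * vs (edge_dir f) i / vs q i) = 2"
proof -
  have "(\<Sum>j\<in>UNIV. q i j * vs (edge_dir f) i / vs q i) = vs (edge_dir f) i" for i
  proof (cases "i \<in> f")
    case True
    obtain c l where "sg c l" "f = {c, l}" using positive_edge_at_nucleus[OF assms] .
    then have "0 < vs q i" using True vs_pos[of c l] vs_pos[of l c] sg_sym by auto
    then show ?thesis
      by (simp add: vs_def[of q, symmetric] sum_divide_distrib[symmetric] sum_distrib_right[symmetric])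
  qed (simp add: vs_edge_dir[OF assms(1)])
  then show ?thesis using sum_vs_edge_dir[OF assms(1)] by simp
qed

lemma Fe_along_coord:
  assumes "ends e = (i0, j0)"
  shows "Fe adj a p ((coords q)(f := coords q f + t)) e =
    (q i0 j0 + t * edge_dir f i0 j0) *
    ((if ap a p i0 j0 = 0 then 0 else ap a p i0 j0 * (q i0 j0 + t * edge_dir f i0 j0) /
        ((vs q i0 + t * vs (edge_dir f) i0) * (vs q j0 + t * vs (edge_dir f) j0)))
     - (\<Sum>(i, j)\<in>{(i, j). 0 < ap a p i j}. ap a p i j * (q i j + t * edge_dir f i j)\<^sup>2 /
        ((vs q i + t * vs (edge_dir f) i) * (vs q j + t * vs (edge_dir f) j))))"
  unfolding Fe_def Fs_def ys_def Hs_def arr_update_coord vs_add_scaled assms by simp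

definition H_dir :: "'v set \<Rightarrow> real" where
  "H_dir f = (\<Sum>(i, j)\<in>{(i, j). 0 < ap a p i j}. ap a p i j *
     (2 * q i j * edge_dir f i j * (vs q i * vs q j)
      - (q i j)\<^sup>2 * (vs (edge_dir f) i * vs q j + vs q i * vs (edge_dir f) j))
     / (vs q i * vs q j)\<^sup>2)"

definition y_dir :: "'v set \<Rightarrow> 'v \<Rightarrow> 'v \<Rightarrow> real" where
  "y_dir f i j = (if ap a p i j = 0 then 0 else ap a p i j *
     (edge_dir f i j * (vs q i * vs q j)
      - q i j * (vs (edge_dir f) i * vs q j + vs q i * vs (edge_dir f) j))
     / (vs q i * vs q j)\<^sup>2)"

lemma DERIV_H_along_coord:
  "((\<lambda>t. \<Sum>(i, j)\<in>{(i, j). 0 < ap a p i j}. ap a p i j * (q i j + t * edge_dir f i j)\<^sup>2 /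
        ((vs q i + t * vs (edge_dir f) i) * (vs q j + t * vs (edge_dir f) j)))
    has_field_derivative H_dir f) (at 0)"
  unfolding H_dir_def
proof (rule DERIV_sum)
  fix x assume "x \<in> {(i, j). 0 < ap a p i j}"
  then obtain i j where x: "x = (i, j)" "0 < ap a p i j" by auto
  then have "vs q i \<noteq> 0" "vs q j \<noteq> 0"
    using vs_pos_if_ap_pos[of i j] vs_pos_if_ap_pos[of j i] ap_sym by auto
  then show "((\<lambda>t. case x of (i, j) \<Rightarrow> ap a p i j * (q i j + t * edge_dir f i j)\<^sup>2 /
        ((vs q i + t * vs (edge_dir f) i) * (vs q j + t * vs (edge_dir f) j))) has_field_derivative
     (case x of (i, j) \<Rightarrow> ap a p i j *
       (2 * q i j * edge_dir f i j * (vs q i * vs q j)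
        - (q i j)\<^sup>2 * (vs (edge_dir f) i * vs q j + vs q i * vs (edge_dir f) j))
     / (vs q i * vs q j)\<^sup>2)) (at 0)"
    unfolding x(1) by (simp add: DERIV_square_over_product)
qed

lemma DERIV_y_along_coord:
  "((\<lambda>t. if ap a p i j = 0 then 0 else ap a p i j * (q i j + t * edge_dir f i j) /
        ((vs q i + t * vs (edge_dir f) i) * (vs q j + t * vs (edge_dir f) j)))
    has_field_derivative y_dir f i j) (at 0)"
proof (cases "ap a p i j = 0")
  case False
  then have "0 < ap a p i j" using ap_nonneg[of i j] by simp
  then have "vs q i \<noteq> 0" "vs q j \<noteq> 0"
    using vs_pos_if_ap_pos[of i j] vs_pos_if_ap_pos[of j i] ap_sym by auto
  then show ?thesis unfolding y_dir_def using False by (simp add: DERIV_linear_over_product)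
qed (simp add: y_dir_def)

lemma H_fn_eq_sum_ap_pos:
  "H_fn a p q = (\<Sum>(i, j)\<in>{(i, j). 0 < ap a p i j}. ap a p i j * (q i j)\<^sup>2 / (vs q i * vs q j))"
  unfolding H_fn_def
  by (rule sum.mono_neutral_left) (use q_eq_0 ap_pos q_pos_iff in fastforce)+

lemma jac_eq:
  assumes "e \<in> edges adj" "ends e = (i, j)"
  shows "jac adj a p q e f
    = edge_dir f i j * (y_fn a p q i j - H_fn a p q) + q i j * (y_dir f i j - H_dir f)"
proof -
  have "((\<lambda>t. q i j + t * edge_dir f i j) has_field_derivative edge_dir f i j) (at 0)"
    by (rule derivative_eq_intros refl | simp)+
  from DERIV_mult[OF this DERIV_diff[OF DERIV_y_along_coord DERIV_H_along_coord]]
  have "((\<lambda>t. Fe adj a p ((coords q)(f := coords q f + t)) e) has_field_derivative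
     edge_dir f i j * (y_fn a p q i j - H_fn a p q) + q i j * (y_dir f i j - H_dir f)) (at 0)"
    unfolding Fe_along_coord[OF assms(2)]
    by (rule DERIV_cong) (simp add: y_fn_def H_fn_eq_sum_ap_pos algebra_simps)
  then show ?thesis unfolding jac_def by (rule DERIV_imp_deriv)
qed

lemma H_dir_term:
  assumes "sg i j"
  shows "ap a p i j * (2 * q i j * edge_dir f i j * (vs q i * vs q j)
      - (q i j)\<^sup>2 * (vs (edge_dir f) i * vs q j + vs q i * vs (edge_dir f) j)) / (vs q i * vs q j)\<^sup>2
    = y_fn a p q i j * (2 * edge_dir f i j
      - q i j * vs (edge_dir f) i / vs q i - q i j * vs (edge_dir f) j / vs q j)"
  using vs_pos[OF assms] vs_pos[OF sg_sym[OF assms]] ap_pos[OF assms]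
  unfolding y_fn_def by (simp add: field_simps power2_eq_square)

end

locale star_network_equilibrium = star_network +
  assumes F_zero: "\<And>i j. F_fn a p q i j = 0"
begin

lemma y_eq_H: "sg i j \<Longrightarrow> y_fn a p q i j = H_fn a p q"
  using F_zero F_zero_iff_y_eq_H by blast

lemma H_eq_H_star: "H_fn a p q = H_star"
  using y_eq_H by (rule y_const_imp_vs_nuclei(1))

lemma y_eq_H_star: "sg i j \<Longrightarrow> y_fn a p q i j = H_star"
  using y_eq_H H_eq_H_star by simp

lemma H_dir_eq_0:
  assumes f: "f \<in> edges adj" "0 < coords q f"
  shows "H_dir f = 0"
proof -
  let ?c = "vs (edge_dir f)" and ?Q = "vs q"
  have summand: "(if 0 < ap a p i j then ap a p i j * (2 * q i j * edge_dir f i j * (?Q i * ?Q j)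
        - (q i j)\<^sup>2 * (?c i * ?Q j + ?Q i * ?c j)) / (?Q i * ?Q j)\<^sup>2 else 0)
      = H_star * (2 * edge_dir f i j - q i j * ?c i / ?Q i - q i j * ?c j / ?Q j)" for i j
  proof (cases "sg i j")
    case True
    then show ?thesis using ap_pos[OF True] H_dir_term[OF True] y_eq_H_star[OF True] by simp
  next
    case False
    then show ?thesis using q_eq_0 edge_dir_nonzero_imp_sg[OF f] by fastforce
  qed
  have "H_dir f = (\<Sum>(i, j)\<in>UNIV. if 0 < ap a p i j then ap a p i j *
        (2 * q i j * edge_dir f i j * (?Q i * ?Q j) - (q i j)\<^sup>2 * (?c i * ?Q j + ?Q i * ?c j))
        / (?Q i * ?Q j)\<^sup>2 else 0)"
    unfolding H_dir_def by (rule sum.mono_neutral_cong_left) (auto split: if_splits)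
  also have "\<dots> = H_star * (2 * (\<Sum>i\<in>UNIV. \<Sum>j\<in>UNIV. edge_dir f i j)
      - (\<Sum>i\<in>UNIV. \<Sum>j\<in>UNIV. q i j * ?c i / ?Q i) - (\<Sum>i\<in>UNIV. \<Sum>j\<in>UNIV. q i j * ?c j / ?Q j))"
    unfolding summand sum_UNIV_pairs
    by (simp add: sum_distrib_left sum_subtractf right_diff_distrib)
  also have "(\<Sum>i\<in>UNIV. \<Sum>j\<in>UNIV. q i j * ?c j / ?Q j)
      = (\<Sum>i\<in>UNIV. \<Sum>j\<in>UNIV. q i j * ?c i / ?Q i)"
    by (subst sum.swap) (simp add: q_sym)
  also have "(\<Sum>i\<in>UNIV. \<Sum>j\<in>UNIV. edge_dir f i j) = 2"
    using sum_vs_edge_dir[OF f(1)] unfolding vs_def .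
  also have "(\<Sum>i\<in>UNIV. \<Sum>j\<in>UNIV. q i j * ?c i / ?Q i) = 2"
    by (rule sum_q_vs_edge_dir[OF f])
  finally show ?thesis by simp
qed

lemma jac_scalar_row:
  assumes "e \<in> edges adj" "coords q e = 0"
  shows "jac adj a p q e f = (if e = f then - H_star else 0)"
proof -
  obtain i j where ij: "ends e = (i, j)" by fastforce
  then have "q i j = 0" using assms(2) unfolding coords_def by simp
  then show ?thesis
    unfolding jac_eq[OF assms(1) ij] edge_dir_ends[OF assms(1) ij] H_eq_H_star y_fn_def by simp
qed

lemma jac_positive_row:
  assumes "e \<in> edges adj" "ends e = (i, j)" "sg i j" "f \<in> edges adj" "0 < coords q f"
  shows "jac adj a p q e f = H_star * (edge_dir f i j
    - q i j * vs (edge_dir f) i / vs q i - q i j * vs (edge_dir f) j / vs q j)"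
proof -
  have pos: "0 < q i j" "0 < vs q i" "0 < vs q j" "0 < H_star"
    using assms(3) q_pos_iff vs_pos[OF assms(3)] vs_pos[OF sg_sym[OF assms(3)]] H_star_pos by auto
  have ap_eq: "ap a p i j = H_star * (vs q i * vs q j) / q i j"
    using y_eq_H_star[OF assms(3)] ap_pos[OF assms(3)] pos unfolding y_fn_def
    by (auto simp: field_simps)
  have "y_dir f i j = H_star * (edge_dir f i j / q i j
      - vs (edge_dir f) i / vs q i - vs (edge_dir f) j / vs q j)"
    unfolding y_dir_def ap_eq using pos by (simp add: field_simps power2_eq_square)
  then show ?thesis
    unfolding jac_eq[OF assms(1,2)] y_eq_H_star[OF assms(3)] H_eq_H_star H_dir_eq_0[OF assms(4,5)]
    using pos by (simp add: field_simps)
qed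

text \<open>The leaf \<open>l\<close> of \<open>e = {c, l}\<close> has \<open>vs q l = q\<^sub>e\<close>, so its term cancels \<open>edge_dir f i j\<close>
  and only the nucleus \<open>c\<close> contributes.\<close>

lemma jac_Gram_entry:
  assumes e: "e \<in> edges adj" "0 < coords q e" and f: "f \<in> edges adj" "0 < coords q f"
  shows "jac adj a p q e f = - (H_star * coords q e) *
    (\<Sum>x\<in>N. 1 / vs q x * (if x \<in> e then 1 else 0) * (if x \<in> f then 1 else 0))"
proof -
  obtain i j where ij: "ends e = (i, j)" by fastforce
  have e_ij: "e = {i, j}" "coords q e = q i j"
    using ends_edge[OF e(1) ij] ij unfolding coords_def by auto
  then have "sg i j" using e(2) q_pos_iff by simp
  obtain c l where cl: "c \<in> N" "sg c l" "e = {c, l}" using positive_edge_at_nucleus[OF e] .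
  have vs_l: "vs q l = coords q e" using vs_leaf[OF cl(1,2)] cl(3) by (simp add: coords_doubleton)
  have leaf_term: "coords q e * vs (edge_dir f) l / vs q l = edge_dir f i j"
    using positive_edge_through_leaf[OF f cl(1,2)] e(2) cl(3)
    unfolding vs_l vs_edge_dir[OF f(1)] edge_dir_ends[OF e(1) ij] by auto
  have ends_sum: "q i j * vs (edge_dir f) i / vs q i + q i j * vs (edge_dir f) j / vs q j
      = coords q e * vs (edge_dir f) c / vs q c + coords q e * vs (edge_dir f) l / vs q l"
    using e_ij cl(3) by (auto simp: doubleton_eq_iff)
  have "(\<Sum>x\<in>N. 1 / vs q x * (if x \<in> e then 1 else 0) * (if x \<in> f then 1 else 0))
      = vs (edge_dir f) c / vs q c"
  proof -
    have "l \<notin> N" using edge_not_two_nuclei[OF cl(2,1)] .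
    then have "(\<Sum>x\<in>N. 1 / vs q x * (if x \<in> e then 1 else 0) * (if x \<in> f then 1 else 0))
        = (\<Sum>x\<in>N. if x = c then 1 / vs q c * (if c \<in> f then 1 else 0) else 0)"
      using cl(3) by (intro sum.cong) auto
    then show ?thesis using cl(1) unfolding vs_edge_dir[OF f(1)] by simp
  qed
  then show ?thesis
    unfolding jac_positive_row[OF e(1) ij \<open>sg i j\<close> f] using ends_sum leaf_term
    by (simp add: algebra_simps)
qed

lemma Re_eigenvalue_jac_nonpos:
  assumes "is_eigenvalue adj (jac adj a p q) lam"
  shows "Re lam \<le> 0"
proof -
  obtain v where "\<And>e. e \<in> edges adj \<Longrightarrow>
      (\<Sum>f\<in>edges adj. complex_of_real (jac adj a p q e f) * v f) = lam * v e"
    and "\<exists>e\<in>edges adj. v e \<noteq> 0"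
    using assms unfolding is_eigenvalue_def by blast
  then show ?thesis
  proof (rule Re_eigenvalue_nonpos_block_Gram[where S = "{e \<in> edges adj. 0 < coords q e}"
        and c = H_star and X = N and d = "\<lambda>e. H_star * coords q e" and g = "\<lambda>x. 1 / vs q x"
        and w = "\<lambda>e x. if x \<in> e then 1 else 0", rotated -2])
    show "jac adj a p q e f = (if e = f then - H_star else 0)"
      if "e \<in> edges adj - {e \<in> edges adj. 0 < coords q e}" "f \<in> edges adj" for e f
    proof -
      have "coords q e = 0"
        using that q_nonneg[of "fst (ends e)" "snd (ends e)"] unfolding coords_def by auto
      then show ?thesis using jac_scalar_row that by blast
    qed
  qed (use H_star_pos vs_nonneg q_pos_iff jac_Gram_entry in \<open>auto simp: coords_def mult.assoc\<close>)
qed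

lemma stable_eq_if_in_Gamma:
  assumes "in_Gamma adj a p h1 q"
  shows "stable_eq adj a p h1 q"
  unfolding stable_eq_def using assms not_in_boundary Re_eigenvalue_jac_nonpos by blast

end

theorem proposition7:
  fixes adj :: "'v::finite \<Rightarrow> 'v \<Rightarrow> bool"
    and a p :: "'v \<Rightarrow> 'v \<Rightarrow> real" and h1 :: real
    and sg :: "'v \<Rightarrow> 'v \<Rightarrow> bool" and N :: "'v set"
    and q :: "'v \<Rightarrow> 'v \<Rightarrow> real"
  assumes adj_sym: "\<And>i j. adj i j \<Longrightarrow> adj j i"
    and adj_irrefl: "\<And>i. \<not> adj i i"
    and a_sym: "\<And>i j. a i j = a j i" and a_nonneg: "\<And>i j. a i j \<ge> 0"
    and a_adj: "\<And>i j. a i j > 0 \<Longrightarrow> adj i j"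
    and p_sym: "\<And>i j. p i j = p j i" and p_range: "\<And>i j. 0 \<le> p i j \<and> p i j \<le> 1"
    and p_adj: "\<And>i j. \<not> adj i j \<Longrightarrow> p i j = 0"
    and ap_pos: "\<exists>i j. a i j * p i j > 0"
    and h1: "0 < h1" "h1 \<le> 1"
    and sub: "is_subgraph adj sg"
    and P: "P_prop adj a p sg"
    and nuc: "nucleus_set sg N"
    and qD: "in_Delta adj a p h1 q"
    and Gq: "\<And>i j. (q i j > 0) \<longleftrightarrow> sg i j"
  shows "(in_Gamma adj a p h1 q \<longleftrightarrow> in_GammaG adj a p h1 sg N q) \<and>
         (in_Gamma adj a p h1 q \<longrightarrow> stable_eq adj a p h1 q)"
proof -
  have "0 < a i j" if "0 < ap a p i j" for i j
    using that a_nonneg[of i j] unfolding ap_def by (auto simp: zero_less_mult_iff)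
  then have "star_network sg N q adj a p"
    using a_sym p_sym a_nonneg p_range ap_pos a_adj
    by (intro star_network_if_P_prop[OF adj_sym adj_irrefl _ _ _ _ sub P nuc qD Gq])
       (simp_all add: ap_def)
  then interpret star_network sg N q adj a p .
  have "stable_eq adj a p h1 q" if equilibrium: "in_Gamma adj a p h1 q"
  proof -
    interpret star_network_equilibrium sg N q adj a p
      by unfold_locales (use equilibrium in \<open>simp add: in_Gamma_def\<close>)
    show ?thesis using equilibrium by (rule stable_eq_if_in_Gamma)
  qed
  then show ?thesis using in_Gamma_iff_in_GammaG[OF qD] by blast
qed

end
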